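(* Let $\phi:[0,1]\to[0,1]$ be concave, $\phi(0)=0$, $\phi(1)=1$, continuous at $0$, with right derivative $\phi'(0)=\infty$. Then $\Lambda_\phi\subsetneq TM_\phi=M_\phi$.
   Context: $\Omega=[0,1]$ with Lebesgue measure $\mu$; $X^*(\omega)=\inf\{\lambda\ge0:\mu\{|X|>\lambda\}\le\omega\}$. $\Lambda_\phi$, $TM_\phi$, $M_\phi$ are the sets of measurable $X$ for which, respectively, the Lorentz norm $\|X\|_{\Lambda_\phi}=\int_0^1X^*(\omega)\phi'(\omega)\,d\omega$, the positive translation equivariant Marcinkiewicz norm $\|X\|_{TM_\phi}=\sup_{0<t<1}\{\frac{\phi(t)}{t}\int_0^tX^*\,d\omega+\frac{\phi(t)-1}{t-1}\int_t^1X^*\,d\omega\}$, and the Marcinkiewicz norm $\|X\|_{M_\phi}=\sup_{0<t\le1}\frac{\phi(t)}{t}\int_0^tX^*\,d\omega$ are finite. *)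

theory Defs
  imports "HOL-Analysis.Analysis"
begin

abbreviation Pspace :: "real measure" where
  "Pspace \<equiv> lebesgue_on {0..1}"

definition rv :: "(real \<Rightarrow> real) set" where
  "rv = borel_measurable Pspace"

definition drearr :: "(real \<Rightarrow> real) \<Rightarrow> real \<Rightarrow> real" where
  "drearr X w = Inf {l. 0 \<le> l \<and> measure Pspace {x \<in> {0..1}. \<bar>X x\<bar> > l} \<le> w}"

text \<open>Right derivative (used as phi'; it exists at every point of (0,1) for concave phi).\<close>
definition rderiv :: "(real \<Rightarrow> real) \<Rightarrow> real \<Rightarrow> real" where
  "rderiv f x = Lim (at_right 0) (\<lambda>h. (f (x + h) - f x) / h)"

definition lorentz_norm :: "(real \<Rightarrow> real) \<Rightarrow> (real \<Rightarrow> real) \<Rightarrow> ennreal" where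
  "lorentz_norm \<phi> X = (\<integral>\<^sup>+ w\<in>{0<..<1}. ennreal (drearr X w * rderiv \<phi> w) \<partial>lborel)"

definition tm_norm :: "(real \<Rightarrow> real) \<Rightarrow> (real \<Rightarrow> real) \<Rightarrow> ennreal" where
  "tm_norm \<phi> X = (SUP t\<in>{0<..<1}.
      ennreal (\<phi> t / t) * (\<integral>\<^sup>+ w\<in>{0<..<t}. ennreal (drearr X w) \<partial>lborel)
    + ennreal ((\<phi> t - 1) / (t - 1)) * (\<integral>\<^sup>+ w\<in>{t<..<1}. ennreal (drearr X w) \<partial>lborel))"

definition m_norm :: "(real \<Rightarrow> real) \<Rightarrow> (real \<Rightarrow> real) \<Rightarrow> ennreal" where
  "m_norm \<phi> X = (SUP t\<in>{0<..1}.
      ennreal (\<phi> t / t) * (\<integral>\<^sup>+ w\<in>{0<..<t}. ennreal (drearr X w) \<partial>lborel))"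

definition Lorentz_space :: "(real \<Rightarrow> real) \<Rightarrow> (real \<Rightarrow> real) set" where
  "Lorentz_space \<phi> = {X \<in> rv. lorentz_norm \<phi> X < \<infinity>}"

definition TM_space :: "(real \<Rightarrow> real) \<Rightarrow> (real \<Rightarrow> real) set" where
  "TM_space \<phi> = {X \<in> rv. tm_norm \<phi> X < \<infinity>}"

definition M_space :: "(real \<Rightarrow> real) \<Rightarrow> (real \<Rightarrow> real) set" where
  "M_space \<phi> = {X \<in> rv. m_norm \<phi> X < \<infinity>}"

end

theory Submission
  imports Defs
begin

text \<open>
  The M- and TM-norms are equivalent: the second term of the TM-norm is at most the whole
  integral of X*, which is the M-term at t = 1, and conversely, since \<open>\<phi> t / t \<ge> 1\<close>, the
  M-term at t = 1 is a limit of TM-terms. The Lorentz norm dominates the M-norm by a Hardy-type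
  inequality for the decreasing function X*, because the integral of \<open>\<phi>'\<close> over (0, m) is at
  least \<open>\<phi> m \<ge> (\<phi> t / t) * m\<close> for \<open>m \<le> t\<close>.

  For strictness, \<open>\<phi> (0+) = 0\<close> and \<open>\<phi>' 0 = \<infinity>\<close> give points \<open>s n\<close> along which both \<open>\<phi> (s n)\<close>
  and \<open>s n / \<phi> (s n)\<close> at least halve. The staircase X with a step of height \<open>1 / \<phi> (s n)\<close>
  on (0, s n) for every n is decreasing, hence essentially its own rearrangement. Its M-norm is
  bounded by two geometric sums, while every step contributes at least 1/2 to its Lorentz norm.
\<close>

section \<open>Nonnegative integrals over intervals\<close>

lemma borel_measurable_antimono_on_indicator:
  fixes f :: "real \<Rightarrow> real"
  assumes "antimono_on I f" "I \<in> sets borel"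
  shows "(\<lambda>w. f w * indicator I w) \<in> borel_measurable borel"
proof -
  have "mono_on I (\<lambda>x. - f x)"
    using assms(1) by (auto intro!: monotone_onI dest: monotone_onD)
  then have "(\<lambda>x. - (- f x)) \<in> borel_measurable (restrict_space borel I)"
    by (intro borel_measurable_uminus borel_measurable_mono_on_fnc)
  then show ?thesis
    using assms(2) by (simp add: borel_measurable_restrict_space_iff mult.commute)
qed

lemma nn_integral_Ioo_split_le:
  fixes g :: "real \<Rightarrow> ennreal"
  assumes [measurable]: "g \<in> borel_measurable borel" and "p \<le> q" "q \<le> r"
  shows "(\<integral>\<^sup>+ w\<in>{p<..<q}. g w \<partial>lborel) + (\<integral>\<^sup>+ w\<in>{q<..<r}. g w \<partial>lborel)
    \<le> (\<integral>\<^sup>+ w\<in>{p<..<r}. g w \<partial>lborel)"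
proof -
  have "(\<integral>\<^sup>+ w\<in>{p<..<q}. g w \<partial>lborel) + (\<integral>\<^sup>+ w\<in>{q<..<r}. g w \<partial>lborel)
      = (\<integral>\<^sup>+ w. g w * indicator {p<..<q} w + g w * indicator {q<..<r} w \<partial>lborel)"
    by (rule nn_integral_add[symmetric]) auto
  also have "\<dots> \<le> (\<integral>\<^sup>+ w\<in>{p<..<r}. g w \<partial>lborel)"
    using assms(2,3) by (intro nn_integral_mono) (auto simp: indicator_def)
  finally show ?thesis .
qed

lemma UN_greaterThanLessThan_tendsto:
  fixes s :: "nat \<Rightarrow> real"
  assumes "s \<longlonglongrightarrow> b" "\<And>n. s n \<le> b"
  shows "(\<Union>n. {a<..<s n}) = {a<..<b}"
proof
  show "(\<Union>n. {a<..<s n}) \<subseteq> {a<..<b}"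
  proof (intro UN_least subsetI)
    fix n w assume "w \<in> {a<..<s n}"
    then show "w \<in> {a<..<b}"
      using assms(2)[of n] by simp
  qed
  show "{a<..<b} \<subseteq> (\<Union>n. {a<..<s n})"
  proof
    fix w assume w: "w \<in> {a<..<b}"
    then have "\<forall>\<^sub>F n in sequentially. w < s n"
      using assms(1) by (intro order_tendstoD(1)) auto
    then obtain n where "w < s n"
      by (auto simp: eventually_sequentially)
    then show "w \<in> (\<Union>n. {a<..<s n})"
      using w by auto
  qed
qed

lemma nn_integral_Ioo_eq_SUP:
  fixes g :: "real \<Rightarrow> ennreal"
  assumes [measurable]: "(\<lambda>w. g w * indicator {a<..<b} w) \<in> borel_measurable borel" and "a < b"
  shows "(\<integral>\<^sup>+ w\<in>{a<..<b}. g w \<partial>lborel) = (SUP s\<in>{a<..<b}. \<integral>\<^sup>+ w\<in>{a<..<s}. g w \<partial>lborel)"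
proof (rule antisym)
  define D where "D = density lborel (\<lambda>w. g w * indicator {a<..<b} w)"
  have D: "emeasure D {a<..<s} = (\<integral>\<^sup>+ w\<in>{a<..<s}. g w \<partial>lborel)" if "s \<le> b" for s
    unfolding D_def using that assms(1)
    by (subst emeasure_density) (auto simp: indicator_def intro!: nn_integral_cong)
  define s where "s n = b - (b - a) / real (Suc (Suc n))" for n
  have s: "s n \<in> {a<..<b}" for n
  proof -
    have "(b - a) / real (Suc (Suc n)) < b - a"
      using \<open>a < b\<close> by (simp add: divide_less_eq)
    then show ?thesis
      using \<open>a < b\<close> by (simp add: s_def)
  qed
  have "incseq s"
    using \<open>a < b\<close> by (intro incseq_SucI) (simp add: s_def frac_le)
  then have "incseq (\<lambda>n. {a<..<s n})"
    unfolding incseq_def by (meson greaterThanLessThan_subseteq_greaterThanLessThan order_refl)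
  have "s \<longlonglongrightarrow> b - 0"
    unfolding s_def by (intro tendsto_diff tendsto_const LIMSEQ_Suc[OF LIMSEQ_Suc[OF lim_const_over_n]])
  then have "(\<Union>n. {a<..<s n}) = {a<..<b}"
    using s by (intro UN_greaterThanLessThan_tendsto) (auto simp: less_imp_le)
  then have "(\<integral>\<^sup>+ w\<in>{a<..<b}. g w \<partial>lborel) = (SUP n. emeasure D {a<..<s n})"
    using \<open>incseq (\<lambda>n. {a<..<s n})\<close> D[of b]
    by (simp add: SUP_emeasure_incseq D_def image_subset_iff)
  also have "\<dots> \<le> (SUP s\<in>{a<..<b}. \<integral>\<^sup>+ w\<in>{a<..<s}. g w \<partial>lborel)"
    using s by (intro SUP_least SUP_upper2) (auto simp: D less_imp_le)
  finally show "(\<integral>\<^sup>+ w\<in>{a<..<b}. g w \<partial>lborel) \<le> (SUP s\<in>{a<..<b}. \<integral>\<^sup>+ w\<in>{a<..<s}. g w \<partial>lborel)" .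
  show "(SUP s\<in>{a<..<b}. \<integral>\<^sup>+ w\<in>{a<..<s}. g w \<partial>lborel) \<le> (\<integral>\<^sup>+ w\<in>{a<..<b}. g w \<partial>lborel)"
    by (intro SUP_least nn_integral_mono) (auto split: split_indicator)
qed

lemma nn_integral_layer_cake:
  fixes f :: "real \<Rightarrow> real" and H :: "real \<Rightarrow> ennreal"
  assumes [measurable]: "f \<in> borel_measurable borel" "H \<in> borel_measurable borel"
    and nonneg: "\<And>w. 0 \<le> f w"
  shows "(\<integral>\<^sup>+ w. ennreal (f w) * H w \<partial>lborel)
    = (\<integral>\<^sup>+ l\<in>{0..}. (\<integral>\<^sup>+ w\<in>{w. l < f w}. H w \<partial>lborel) \<partial>lborel)"
proof -
  have "(\<integral>\<^sup>+ w. ennreal (f w) * H w \<partial>lborel)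
      = (\<integral>\<^sup>+ w. (\<integral>\<^sup>+ l. indicator {0..<f w} l * H w \<partial>lborel) \<partial>lborel)"
    using nonneg by (intro nn_integral_cong) (simp add: nn_integral_multc)
  also have "\<dots> = (\<integral>\<^sup>+ l. (\<integral>\<^sup>+ w. indicator {0..<f w} l * H w \<partial>lborel) \<partial>lborel)"
  proof (rule lborel_pair.Fubini'[symmetric])
    have "(\<lambda>(w, l). indicator {0..<f w} l * H w :: ennreal)
        = (\<lambda>p. if 0 \<le> snd p \<and> snd p < f (fst p) then H (fst p) else 0)"
      by (auto simp: indicator_def fun_eq_iff)
    also have "\<dots> \<in> borel_measurable (lborel \<Otimes>\<^sub>M lborel)"
      by measurable
    finally show "(\<lambda>(w, l). indicator {0..<f w} l * H w) \<in> borel_measurable (lborel \<Otimes>\<^sub>M lborel)" .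
  qed
  also have "\<dots> = (\<integral>\<^sup>+ l\<in>{0..}. (\<integral>\<^sup>+ w\<in>{w. l < f w}. H w \<partial>lborel) \<partial>lborel)"
    by (intro nn_integral_cong) (auto simp: indicator_def intro!: nn_integral_cong)
  finally show ?thesis .
qed

lemma nn_integral_down_closed_ge:
  fixes g :: "real \<Rightarrow> real"
  assumes S: "S \<subseteq> {0<..<t}" and down_closed: "\<And>v w. w \<in> S \<Longrightarrow> 0 < v \<Longrightarrow> v < w \<Longrightarrow> v \<in> S"
    and c: "0 \<le> c"
    and initial: "\<And>m. 0 < m \<Longrightarrow> m \<le> t \<Longrightarrow> ennreal (c * m) \<le> (\<integral>\<^sup>+ w\<in>{0<..<m}. ennreal (g w) \<partial>lborel)"
  shows "(\<integral>\<^sup>+ w\<in>S. ennreal c \<partial>lborel) \<le> (\<integral>\<^sup>+ w\<in>S. ennreal (g w) \<partial>lborel)"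
proof (cases "S = {}")
  case False
  have bdd: "bdd_above S"
    using S by (intro bdd_aboveI[of _ t]) auto
  define m where "m = Sup S"
  have "S \<subseteq> {0<..m}"
    using S cSup_upper[OF _ bdd] by (auto simp: m_def)
  moreover have "{0<..<m} \<subseteq> S"
  proof
    fix v assume v: "v \<in> {0<..<m}"
    then obtain w where "w \<in> S" "v < w"
      using less_cSup_iff[OF False bdd, of v] by (auto simp: m_def)
    then show "v \<in> S"
      using v down_closed by simp
  qed
  moreover have "m \<le> t"
    using S False by (auto simp: m_def intro!: cSup_least)
  ultimately have m: "0 < m" "m \<le> t"
    using False by auto
  have "(\<integral>\<^sup>+ w\<in>S. ennreal c \<partial>lborel) \<le> (\<integral>\<^sup>+ w\<in>{0<..m}. ennreal c \<partial>lborel)"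
    using \<open>S \<subseteq> {0<..m}\<close> by (intro nn_integral_mono) (auto split: split_indicator)
  also have "\<dots> = ennreal (c * m)"
    using m c by (simp add: nn_integral_cmult_indicator ennreal_mult)
  also have "\<dots> \<le> (\<integral>\<^sup>+ w\<in>{0<..<m}. ennreal (g w) \<partial>lborel)"
    using initial m by simp
  also have "\<dots> \<le> (\<integral>\<^sup>+ w\<in>S. ennreal (g w) \<partial>lborel)"
    using \<open>{0<..<m} \<subseteq> S\<close> by (intro nn_integral_mono) (auto split: split_indicator)
  finally show ?thesis .
qed simp

lemma nn_integral_antimono_mult_ge:
  fixes f g :: "real \<Rightarrow> real"
  assumes f: "antimono_on {0<..<t} f" "\<And>w. 0 < w \<Longrightarrow> w < t \<Longrightarrow> 0 \<le> f w"
    and g: "g \<in> borel_measurable borel" "\<And>w. 0 \<le> g w"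
    and c: "0 \<le> c"
    and initial: "\<And>m. 0 < m \<Longrightarrow> m \<le> t \<Longrightarrow> ennreal (c * m) \<le> (\<integral>\<^sup>+ w\<in>{0<..<m}. ennreal (g w) \<partial>lborel)"
  shows "ennreal c * (\<integral>\<^sup>+ w\<in>{0<..<t}. ennreal (f w) \<partial>lborel)
    \<le> (\<integral>\<^sup>+ w\<in>{0<..<t}. ennreal (f w * g w) \<partial>lborel)"
proof -
  define F where "F w = f w * indicator {0<..<t} w" for w
  have [measurable]: "F \<in> borel_measurable borel" "g \<in> borel_measurable borel"
    unfolding F_def using f(1) g(1) by (auto intro: borel_measurable_antimono_on_indicator)
  have F_nonneg: "0 \<le> F w" for w
    using f(2) by (simp add: F_def indicator_def)
  have level_set: "{w. l < F w} \<subseteq> {0<..<t}" if "0 \<le> l" for l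
    using that by (auto simp: F_def split: split_indicator)
  have level: "(\<integral>\<^sup>+ w\<in>{w. l < F w}. ennreal c \<partial>lborel) \<le> (\<integral>\<^sup>+ w\<in>{w. l < F w}. ennreal (g w) \<partial>lborel)"
    if l: "0 \<le> l" for l
  proof (rule nn_integral_down_closed_ge[OF level_set[OF l] _ c initial])
    fix v w assume w: "w \<in> {w. l < F w}" and v: "0 < v" "v < w"
    then have "w \<in> {0<..<t}"
      using level_set[OF l] by auto
    then have "f w \<le> f v"
      using v monotone_onD[OF f(1), of v w] by simp
    moreover have "l < f w"
      using w \<open>w \<in> {0<..<t}\<close> by (simp add: F_def)
    ultimately show "v \<in> {w. l < F w}"
      using v \<open>w \<in> {0<..<t}\<close> by (simp add: F_def)
  qed
  have "(\<integral>\<^sup>+ w\<in>{0<..<t}. ennreal (f w) \<partial>lborel) = (\<integral>\<^sup>+ w. ennreal (F w) \<partial>lborel)"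
    by (intro nn_integral_cong) (simp add: F_def split: split_indicator)
  then have "ennreal c * (\<integral>\<^sup>+ w\<in>{0<..<t}. ennreal (f w) \<partial>lborel) = (\<integral>\<^sup>+ w. ennreal (F w) * ennreal c \<partial>lborel)"
    by (simp add: nn_integral_cmult mult.commute)
  also have "\<dots> = (\<integral>\<^sup>+ l\<in>{0..}. (\<integral>\<^sup>+ w\<in>{w. l < F w}. ennreal c \<partial>lborel) \<partial>lborel)"
    using F_nonneg by (intro nn_integral_layer_cake) auto
  also have "\<dots> \<le> (\<integral>\<^sup>+ l\<in>{0..}. (\<integral>\<^sup>+ w\<in>{w. l < F w}. ennreal (g w) \<partial>lborel) \<partial>lborel)"
    using level by (intro nn_integral_mono) (simp split: split_indicator)
  also have "\<dots> = (\<integral>\<^sup>+ w. ennreal (F w) * ennreal (g w) \<partial>lborel)"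
    using F_nonneg by (intro nn_integral_layer_cake[symmetric]) auto
  also have "\<dots> = (\<integral>\<^sup>+ w\<in>{0<..<t}. ennreal (f w * g w) \<partial>lborel)"
    using f(2) g(2) by (intro nn_integral_cong) (simp add: F_def ennreal_mult split: split_indicator)
  finally show ?thesis .
qed

section \<open>Right derivatives of concave functions\<close>

lemma concave_on_slope_le:
  fixes f :: "real \<Rightarrow> real"
  assumes "concave_on I f" "x \<in> I" "y \<in> I" "x < t" "t < y"
  shows "(f y - f x) / (y - x) \<le> (f t - f x) / (t - x)"
    and "(f y - f t) / (y - t) \<le> (f y - f x) / (y - x)"
proof -
  have "convex_on I (\<lambda>x. - f x)"
    using assms(1) by (simp add: concave_on_def)
  note slopes = convex_on_slope_le[OF this assms(2-5)]
  show "(f y - f x) / (y - x) \<le> (f t - f x) / (t - x)"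
    using slopes(1) assms(4,5) by (simp add: field_simps)
  show "(f y - f t) / (y - t) \<le> (f y - f x) / (y - x)"
    using slopes(2) assms(4,5) by (simp add: field_simps)
qed

context
  fixes f :: "real \<Rightarrow> real" and a b :: real
  assumes concave: "concave_on {a..b} f"
begin

lemma concave_on_slope_antimono:
  assumes "a \<le> x" "x < y" "y < z" "z \<le> b"
  shows "(f z - f y) / (z - y) \<le> (f y - f x) / (y - x)"
  using concave_on_slope_le[OF concave, of x z y] assms by auto

lemma concave_on_diff_quotient_antimono:
  assumes "a \<le> w" "0 < h" "h \<le> k" "w + k \<le> b"
  shows "(f (w + k) - f w) / k \<le> (f (w + h) - f w) / h"
  using concave_on_slope_le(1)[OF concave, of w "w + k" "w + h"] assms
  by (cases "h = k") auto

lemma concave_on_diff_quotient_le: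
  assumes "a < w" "0 < h" "w + h \<le> b"
  shows "(f (w + h) - f w) / h \<le> (f w - f a) / (w - a)"
  using concave_on_slope_antimono[of a w "w + h"] assms by simp

lemma rderiv_concave_on:
  assumes "a < w" "w < b"
  shows "rderiv f w = (SUP h\<in>{0<..b - w}. (f (w + h) - f w) / h)"
proof -
  let ?q = "\<lambda>h. (f (w + h) - f w) / h"
  let ?L = "SUP h\<in>{0<..b - w}. ?q h"
  have bdd: "bdd_above (?q ` {0<..b - w})"
    using concave_on_diff_quotient_le assms by (intro bdd_aboveI[of _ "(f w - f a) / (w - a)"]) auto
  have "(?q \<longlongrightarrow> ?L) (at_right 0)"
  proof (rule order_tendstoI)
    fix y assume "y < ?L"
    then obtain k where k: "k \<in> {0<..b - w}" "y < ?q k"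
      using less_cSUP_iff[OF _ bdd] assms by auto
    have "\<forall>\<^sub>F h in at_right 0. h \<in> {0<..<k}"
      using k by (intro eventually_at_right_real) auto
    then show "\<forall>\<^sub>F h in at_right 0. y < ?q h"
    proof (rule eventually_mono)
      fix h assume "h \<in> {0<..<k}"
      then show "y < ?q h"
        using concave_on_diff_quotient_antimono[of w h k] k assms by fastforce
    qed
  next
    fix y assume "?L < y"
    have "\<forall>\<^sub>F h in at_right 0. h \<in> {0<..<b - w}"
      using assms by (intro eventually_at_right_real) auto
    then show "\<forall>\<^sub>F h in at_right 0. ?q h < y"
    proof (rule eventually_mono)
      fix h assume "h \<in> {0<..<b - w}"
      then have "?q h \<le> ?L" by (intro cSUP_upper bdd) auto
      then show "?q h < y" using \<open>?L < y\<close> by simp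
    qed
  qed
  then show ?thesis
    unfolding rderiv_def by (intro tendsto_Lim) auto
qed

lemma rderiv_concave_on_ge:
  assumes "a < w" "0 < h" "w + h \<le> b"
  shows "(f (w + h) - f w) / h \<le> rderiv f w"
proof -
  have "bdd_above ((\<lambda>h. (f (w + h) - f w) / h) ` {0<..b - w})"
    using concave_on_diff_quotient_le assms by (intro bdd_aboveI[of _ "(f w - f a) / (w - a)"]) auto
  then have "(f (w + h) - f w) / h \<le> (SUP h\<in>{0<..b - w}. (f (w + h) - f w) / h)"
    by (rule cSUP_upper[rotated]) (use assms in auto)
  then show ?thesis
    using assms by (simp add: rderiv_concave_on)
qed

lemma rderiv_concave_on_antimono:
  assumes "a < v" "v \<le> w" "w < b"
  shows "rderiv f w \<le> rderiv f v"
proof (cases "v = w")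
  case False
  have "rderiv f w = (SUP h\<in>{0<..b - w}. (f (w + h) - f w) / h)"
    using assms by (simp add: rderiv_concave_on)
  also have "\<dots> \<le> (f w - f v) / (w - v)"
  proof (rule cSUP_least)
    fix h assume "h \<in> {0<..b - w}"
    then show "(f (w + h) - f w) / h \<le> (f w - f v) / (w - v)"
      using assms False concave_on_slope_antimono[of v w "w + h"] by simp
  qed (use assms in auto)
  also have "\<dots> \<le> rderiv f v"
    using rderiv_concave_on_ge[of v "w - v"] assms False by simp
  finally show ?thesis .
qed simp

lemma borel_measurable_rderiv_concave_on:
  "(\<lambda>w. rderiv f w * indicator {a<..<b} w) \<in> borel_measurable borel"
  by (intro borel_measurable_antimono_on_indicator monotone_onI rderiv_concave_on_antimono) auto

lemma nn_integral_rderiv_concave_on_cong: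
  assumes "a \<le> x" "y \<le> b"
  shows "(\<integral>\<^sup>+ w\<in>{x<..<y}. ennreal (rderiv f w) \<partial>lborel)
    = (\<integral>\<^sup>+ w\<in>{x<..<y}. ennreal (rderiv f w * indicator {a<..<b} w) \<partial>lborel)"
  using assms by (intro nn_integral_cong) (auto simp: indicator_def)

text \<open>On (x, y) the antitone function \<open>rderiv f\<close> dominates \<open>rderiv f y\<close>, which in turn dominates
  the slope of f on the next cell [y, 2y - x].\<close>

lemma nn_integral_rderiv_concave_on_ge_step:
  assumes "a \<le> x" "x < y" "2 * y - x \<le> b"
  shows "ennreal (f (2 * y - x) - f y) \<le> (\<integral>\<^sup>+ w\<in>{x<..<y}. ennreal (rderiv f w) \<partial>lborel)"
proof -
  have "f (2 * y - x) - f y \<le> rderiv f y * (y - x)"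
    using rderiv_concave_on_ge[of y "y - x"] assms by (simp add: divide_le_eq)
  then have "ennreal (f (2 * y - x) - f y) \<le> ennreal (rderiv f y) * emeasure lborel {x<..<y}"
    using assms by (simp add: ennreal_leI flip: ennreal_mult'')
  also have "\<dots> = (\<integral>\<^sup>+ w\<in>{x<..<y}. ennreal (rderiv f y) \<partial>lborel)"
    by (simp add: nn_integral_cmult_indicator)
  also have "\<dots> \<le> (\<integral>\<^sup>+ w\<in>{x<..<y}. ennreal (rderiv f w) \<partial>lborel)"
    using assms by (intro nn_integral_mono)
      (auto simp: indicator_def intro!: ennreal_leI rderiv_concave_on_antimono)
  finally show ?thesis .
qed

lemma nn_integral_rderiv_concave_on_ge_steps:
  assumes "0 < h" "a + real (m + 1) * h \<le> b"
  shows "ennreal (f (a + real (m + 1) * h) - f (a + h))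
    \<le> (\<integral>\<^sup>+ w\<in>{a<..<a + real m * h}. ennreal (rderiv f w) \<partial>lborel)"
  using assms(2)
proof (induction m)
  case (Suc m)
  let ?x = "a + real m * h" and ?y = "a + real (m + 1) * h"
  have "?x \<le> ?y" "?y \<le> b"
    using Suc.prems assms(1) by (simp_all add: algebra_simps)
  have "ennreal (f (a + real (Suc m + 1) * h) - f (a + h))
      \<le> ennreal (f ?y - f (a + h)) + ennreal (f (2 * ?y - ?x) - f ?y)"
    by (auto simp: ennreal_plus_if algebra_simps intro: ennreal_leI)
  also have "\<dots> \<le> (\<integral>\<^sup>+ w\<in>{a<..<?x}. ennreal (rderiv f w) \<partial>lborel)
      + (\<integral>\<^sup>+ w\<in>{?x<..<?y}. ennreal (rderiv f w) \<partial>lborel)"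
    using Suc assms(1) by (intro add_mono nn_integral_rderiv_concave_on_ge_step)
      (simp_all add: algebra_simps)
  also have "\<dots> \<le> (\<integral>\<^sup>+ w\<in>{a<..<?y}. ennreal (rderiv f w) \<partial>lborel)"
  proof -
    have "(\<lambda>w. ennreal (rderiv f w * indicator {a<..<b} w)) \<in> borel_measurable borel"
      using borel_measurable_rderiv_concave_on by measurable
    moreover have "a \<le> ?x"
      using assms(1) by simp
    ultimately show ?thesis
      using \<open>?x \<le> ?y\<close> \<open>?y \<le> b\<close>
      by (simp only: nn_integral_rderiv_concave_on_cong[of a ?x] nn_integral_rderiv_concave_on_cong[of ?x ?y]
          nn_integral_rderiv_concave_on_cong[of a ?y] nn_integral_Ioo_split_le order_refl order_trans)
  qed
  finally show ?case
    by simp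
qed simp

lemma nn_integral_rderiv_concave_on_ge:
  assumes cont: "continuous (at a within {a..b}) f" and s: "a < s" "s \<le> b"
  shows "ennreal (f s - f a) \<le> (\<integral>\<^sup>+ w\<in>{a<..<s}. ennreal (rderiv f w) \<partial>lborel)"
proof -
  let ?x = "\<lambda>n. a + (s - a) / real (Suc n)"
  have "(\<lambda>n. (s - a) / real n) \<longlonglongrightarrow> 0"
    by (rule lim_const_over_n)
  then have "?x \<longlonglongrightarrow> a + 0"
    by (intro tendsto_add tendsto_const) (rule LIMSEQ_Suc)
  moreover have "?x n \<in> {a..b}" for n
  proof -
    have "(s - a) / real (Suc n) \<le> s - a"
      using s by (simp add: divide_le_eq)
    then show ?thesis
      using s by simp
  qed
  ultimately have "(\<lambda>n. f (?x n)) \<longlonglongrightarrow> f a"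
    by (intro continuous_within_tendsto_compose'[OF cont]) auto
  then have lim: "(\<lambda>n. ennreal (f s - f (?x n))) \<longlonglongrightarrow> ennreal (f s - f a)"
    by (intro tendsto_ennrealI tendsto_diff tendsto_const)
  have "ennreal (f s - f (?x n)) \<le> (\<integral>\<^sup>+ w\<in>{a<..<s}. ennreal (rderiv f w) \<partial>lborel)" for n
  proof -
    have "ennreal (f s - f (?x n))
        \<le> (\<integral>\<^sup>+ w\<in>{a<..<a + real n * ((s - a) / real (Suc n))}. ennreal (rderiv f w) \<partial>lborel)"
      using nn_integral_rderiv_concave_on_ge_steps[of "(s - a) / real (Suc n)" n] s by simp
    also have "\<dots> \<le> (\<integral>\<^sup>+ w\<in>{a<..<s}. ennreal (rderiv f w) \<partial>lborel)"
    proof -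
      have "real n * ((s - a) / real (Suc n)) \<le> s - a"
        using s by (simp add: divide_le_eq)
      then show ?thesis
        by (intro nn_integral_mono) (auto simp: indicator_def)
    qed
    finally show ?thesis .
  qed
  then show ?thesis
    using LIMSEQ_le_const2[OF lim] by blast
qed

end

section \<open>Decreasing rearrangements\<close>

definition drearr_levels :: "(real \<Rightarrow> real) \<Rightarrow> real \<Rightarrow> real set" where
  "drearr_levels X w = {l. 0 \<le> l \<and> measure Pspace {x \<in> {0..1}. \<bar>X x\<bar> > l} \<le> w}"

lemma drearr_eq_Inf_levels: "drearr X w = Inf (drearr_levels X w)"
  by (simp add: drearr_def drearr_levels_def)

lemma bdd_below_drearr_levels: "bdd_below (drearr_levels X w)"
  by (intro bdd_belowI[of _ 0]) (auto simp: drearr_levels_def)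

lemma sets_Pspace_level_set:
  assumes "X \<in> rv"
  shows "{x \<in> {0..1}. \<bar>X x\<bar> > l} \<in> sets Pspace"
proof -
  have [measurable]: "X \<in> borel_measurable Pspace"
    using assms by (simp add: rv_def)
  have "{x \<in> space Pspace. \<bar>X x\<bar> > l} \<in> sets Pspace"
    by measurable
  then show ?thesis
    by simp
qed

lemma drearr_levels_nonempty:
  assumes X: "X \<in> rv" and w: "0 < w"
  shows "drearr_levels X w \<noteq> {}"
proof -
  interpret finite_measure Pspace
    by (rule finite_measure_lebesgue_on) auto
  define A where "A n = {x \<in> {0..1}. \<bar>X x\<bar> > real n}" for n
  have "(\<lambda>n. measure Pspace (A n)) \<longlonglongrightarrow> measure Pspace (\<Inter>n. A n)"
    using sets_Pspace_level_set[OF X] by (intro finite_Lim_measure_decseq) (auto simp: A_def decseq_def)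
  moreover have "(\<Inter>n. A n) = {}"
    by (auto simp: A_def) (meson not_le real_arch_simple)
  ultimately have "(\<lambda>n. measure Pspace (A n)) \<longlonglongrightarrow> 0"
    by simp
  then obtain n where "measure Pspace (A n) < w"
    using w by (metis order_tendstoD(2) eventually_sequentially order_refl)
  then have "real n \<in> drearr_levels X w"
    by (simp add: drearr_levels_def A_def)
  then show ?thesis
    by blast
qed

lemma drearr_nonneg:
  assumes "X \<in> rv" "0 < w"
  shows "0 \<le> drearr X w"
  unfolding drearr_eq_Inf_levels using drearr_levels_nonempty[OF assms]
  by (intro cInf_greatest) (auto simp: drearr_levels_def)

lemma drearr_antimono:
  assumes "X \<in> rv" "0 < v" "v \<le> w"
  shows "drearr X w \<le> drearr X v"
  unfolding drearr_eq_Inf_levels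
proof (rule cInf_superset_mono)
  show "drearr_levels X v \<noteq> {}"
    using drearr_levels_nonempty assms by simp
  show "drearr_levels X v \<subseteq> drearr_levels X w"
    using assms by (auto simp: drearr_levels_def)
qed (rule bdd_below_drearr_levels)

lemma borel_measurable_drearr:
  assumes "X \<in> rv"
  shows "(\<lambda>w. ennreal (drearr X w) * indicator {0<..<1} w) \<in> borel_measurable borel"
proof -
  have "(\<lambda>w. drearr X w * indicator {0<..<1} w) \<in> borel_measurable borel"
    using assms by (intro borel_measurable_antimono_on_indicator monotone_onI drearr_antimono) auto
  then have "(\<lambda>w. ennreal (drearr X w * indicator {0<..<1} w)) \<in> borel_measurable borel"
    by measurable
  also have "(\<lambda>w. ennreal (drearr X w * indicator {0<..<1} w)) = (\<lambda>w. ennreal (drearr X w) * indicator {0<..<1} w)"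
    by (auto split: split_indicator)
  finally show ?thesis .
qed

lemma measure_Pspace_eq_lborel:
  assumes "I \<subseteq> {0..1}" "I \<in> sets borel"
  shows "measure Pspace I = measure lborel I"
  using assms by (subst measure_restrict_space) auto

lemma drearr_le_antimono:
  assumes X: "X \<in> rv" and nonneg: "\<And>x. 0 \<le> X x" and anti: "antimono_on {0<..1} X"
    and w: "0 < w" "w < 1"
  shows "drearr X w \<le> X w"
proof -
  interpret finite_measure Pspace
    by (rule finite_measure_lebesgue_on) auto
  have "{x \<in> {0..1}. \<bar>X x\<bar> > X w} \<subseteq> {0..w}"
  proof
    fix x assume "x \<in> {x \<in> {0..1}. \<bar>X x\<bar> > X w}"
    then have x: "0 \<le> x" "x \<le> 1" "\<bar>X x\<bar> > X w"
      by auto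
    have "x \<le> w"
    proof (rule ccontr)
      assume "\<not> x \<le> w"
      then have "X x \<le> X w"
        using x w by (intro monotone_onD[OF anti]) auto
      then show False
        using x nonneg[of x] by simp
    qed
    then show "x \<in> {0..w}"
      using x by simp
  qed
  then have "measure Pspace {x \<in> {0..1}. \<bar>X x\<bar> > X w} \<le> measure Pspace {0..w}"
    using sets_Pspace_level_set[OF X] w by (intro finite_measure_mono) (auto simp: sets_restrict_space_iff)
  also have "\<dots> = w"
    using w by (simp add: measure_Pspace_eq_lborel)
  finally have "X w \<in> drearr_levels X w"
    using nonneg[of w] by (simp add: drearr_levels_def)
  then show ?thesis
    unfolding drearr_eq_Inf_levels by (intro cInf_lower bdd_below_drearr_levels)
qed

lemma drearr_ge_antimono:
  assumes X: "X \<in> rv" and nonneg: "\<And>x. 0 \<le> X x" and anti: "antimono_on {0<..1} X"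
    and w: "0 < w" "w < v" "v \<le> 1"
  shows "X v \<le> drearr X w"
  unfolding drearr_eq_Inf_levels
proof (rule cInf_greatest)
  show "drearr_levels X w \<noteq> {}"
    using drearr_levels_nonempty X w by simp
  interpret finite_measure Pspace
    by (rule finite_measure_lebesgue_on) auto
  fix l assume l: "l \<in> drearr_levels X w"
  show "X v \<le> l"
  proof (rule ccontr)
    assume "\<not> X v \<le> l"
    have "{0<..<v} \<subseteq> {x \<in> {0..1}. \<bar>X x\<bar> > l}"
    proof
      fix x assume x: "x \<in> {0<..<v}"
      then have "X v \<le> X x"
        using w by (intro monotone_onD[OF anti]) auto
      then show "x \<in> {x \<in> {0..1}. \<bar>X x\<bar> > l}"
        using x w \<open>\<not> X v \<le> l\<close> nonneg[of x] by auto
    qed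
    then have "measure Pspace {0<..<v} \<le> measure Pspace {x \<in> {0..1}. \<bar>X x\<bar> > l}"
      using sets_Pspace_level_set[OF X] by (intro finite_measure_mono)
    moreover have "measure Pspace {0<..<v} = v"
      using w measure_Pspace_eq_lborel[of "{0<..<v}"] by (force simp: subset_iff)
    ultimately show False
      using l w by (simp add: drearr_levels_def)
  qed
qed

section \<open>The Lorentz and Marcinkiewicz spaces of a concave distortion\<close>

locale concave_distortion =
  fixes \<phi> :: "real \<Rightarrow> real"
  assumes range: "\<forall>x\<in>{0..1}. \<phi> x \<in> {0..1}"
    and concave: "concave_on {0..1} \<phi>"
    and zero: "\<phi> 0 = 0" and one: "\<phi> 1 = 1"
    and continuous_at_0: "continuous (at 0 within {0..1}) \<phi>"
begin

lemma phi_nonneg: "0 \<le> x \<Longrightarrow> x \<le> 1 \<Longrightarrow> 0 \<le> \<phi> x"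
  and phi_le_one: "0 \<le> x \<Longrightarrow> x \<le> 1 \<Longrightarrow> \<phi> x \<le> 1"
  using range by auto

lemma phi_ge_id:
  assumes "0 \<le> x" "x \<le> 1"
  shows "x \<le> \<phi> x"
  using concave_onD_Icc'[OF concave, of x] assms zero one by simp

lemma phi_pos: "0 < x \<Longrightarrow> x \<le> 1 \<Longrightarrow> 0 < \<phi> x"
  using phi_ge_id[of x] by simp

lemma phi_mono:
  assumes "0 \<le> x" "x \<le> y" "y \<le> 1"
  shows "\<phi> x \<le> \<phi> y"
proof (cases "x < y \<and> y < 1")
  case True
  have "(\<phi> 1 - \<phi> x) / (1 - x) \<le> (\<phi> y - \<phi> x) / (y - x)"
    using concave_on_slope_le(1)[OF concave, of x 1 y] True assms by simp
  moreover have "0 \<le> (\<phi> 1 - \<phi> x) / (1 - x)"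
    using phi_le_one[of x] True assms one by simp
  ultimately have "0 \<le> (\<phi> y - \<phi> x) / (y - x)"
    by linarith
  then show ?thesis
    using True by (simp add: zero_le_divide_iff)
next
  case False
  then show ?thesis
    using assms phi_le_one one by (cases "x = y") auto
qed

lemma phi_ratio_antimono:
  assumes "0 < x" "x \<le> y" "y \<le> 1"
  shows "\<phi> y / y \<le> \<phi> x / x"
  using concave_on_slope_le(1)[OF concave, of 0 y x] assms zero by (cases "x = y") auto

lemma rderiv_nonneg:
  assumes "0 < w" "w < 1"
  shows "0 \<le> rderiv \<phi> w"
proof -
  have "0 \<le> (\<phi> (w + (1 - w)) - \<phi> w) / (1 - w)"
    using phi_le_one[of w] one assms by simp
  also have "\<dots> \<le> rderiv \<phi> w"
    using rderiv_concave_on_ge[OF concave, of w "1 - w"] assms by simp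
  finally show ?thesis .
qed

lemma nn_integral_rderiv_ge:
  assumes "0 < s" "s \<le> 1"
  shows "ennreal (\<phi> s) \<le> (\<integral>\<^sup>+ w\<in>{0<..<s}. ennreal (rderiv \<phi> w) \<partial>lborel)"
  using nn_integral_rderiv_concave_on_ge[OF concave continuous_at_0 assms] zero by simp

lemma tm_norm_le_m_norm: "tm_norm \<phi> X \<le> 2 * m_norm \<phi> X"
  unfolding tm_norm_def mult_2
proof (intro SUP_least add_mono)
  fix t :: real assume t: "t \<in> {0<..<1}"
  show "ennreal (\<phi> t / t) * (\<integral>\<^sup>+ w\<in>{0<..<t}. ennreal (drearr X w) \<partial>lborel) \<le> m_norm \<phi> X"
    unfolding m_norm_def using t by (intro SUP_upper2[of t]) auto
  have "(\<phi> t - 1) / (t - 1) \<le> 1"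
    using phi_ge_id[of t] t by (simp add: divide_le_eq)
  then have "ennreal ((\<phi> t - 1) / (t - 1)) * (\<integral>\<^sup>+ w\<in>{t<..<1}. ennreal (drearr X w) \<partial>lborel)
      \<le> ennreal (\<phi> 1 / 1) * (\<integral>\<^sup>+ w\<in>{0<..<1}. ennreal (drearr X w) \<partial>lborel)"
    using t one by (intro mult_mono nn_integral_mono) (auto simp: ennreal_le_1 split: split_indicator)
  also have "\<dots> \<le> m_norm \<phi> X"
    unfolding m_norm_def by (intro SUP_upper2[of 1]) auto
  finally show "ennreal ((\<phi> t - 1) / (t - 1)) * (\<integral>\<^sup>+ w\<in>{t<..<1}. ennreal (drearr X w) \<partial>lborel)
      \<le> m_norm \<phi> X" .
qed

lemma tm_norm_ge_term:
  assumes "t \<in> {0<..<1}"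
  shows "ennreal (\<phi> t / t) * (\<integral>\<^sup>+ w\<in>{0<..<t}. ennreal (drearr X w) \<partial>lborel) \<le> tm_norm \<phi> X"
  unfolding tm_norm_def using assms by (intro SUP_upper2[of t]) (auto intro: add_increasing2)

lemma m_norm_le_tm_norm:
  assumes X: "X \<in> rv"
  shows "m_norm \<phi> X \<le> tm_norm \<phi> X"
  unfolding m_norm_def
proof (rule SUP_least)
  fix t :: real assume t: "t \<in> {0<..1}"
  show "ennreal (\<phi> t / t) * (\<integral>\<^sup>+ w\<in>{0<..<t}. ennreal (drearr X w) \<partial>lborel) \<le> tm_norm \<phi> X"
  proof (cases "t = 1")
    case True
    have "(\<integral>\<^sup>+ w\<in>{0<..<1}. ennreal (drearr X w) \<partial>lborel)
        = (SUP s\<in>{0<..<1}. \<integral>\<^sup>+ w\<in>{0<..<s}. ennreal (drearr X w) \<partial>lborel)"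
      using borel_measurable_drearr[OF X] by (rule nn_integral_Ioo_eq_SUP) simp
    also have "\<dots> \<le> tm_norm \<phi> X"
    proof (rule SUP_least)
      fix s :: real assume s: "s \<in> {0<..<1}"
      have "ennreal 1 \<le> ennreal (\<phi> s / s)"
        using phi_ge_id[of s] s by (intro ennreal_leI) simp
      then have "1 * (\<integral>\<^sup>+ w\<in>{0<..<s}. ennreal (drearr X w) \<partial>lborel)
          \<le> ennreal (\<phi> s / s) * (\<integral>\<^sup>+ w\<in>{0<..<s}. ennreal (drearr X w) \<partial>lborel)"
        by (intro mult_right_mono) auto
      then have "(\<integral>\<^sup>+ w\<in>{0<..<s}. ennreal (drearr X w) \<partial>lborel)
          \<le> ennreal (\<phi> s / s) * (\<integral>\<^sup>+ w\<in>{0<..<s}. ennreal (drearr X w) \<partial>lborel)"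
        by simp
      also have "\<dots> \<le> tm_norm \<phi> X"
        using s by (rule tm_norm_ge_term)
      finally show "(\<integral>\<^sup>+ w\<in>{0<..<s}. ennreal (drearr X w) \<partial>lborel) \<le> tm_norm \<phi> X" .
    qed
    finally show ?thesis
      using True one by simp
  qed (use t tm_norm_ge_term in auto)
qed

lemma m_norm_le_lorentz_norm:
  assumes X: "X \<in> rv"
  shows "m_norm \<phi> X \<le> lorentz_norm \<phi> X"
  unfolding m_norm_def
proof (rule SUP_least)
  fix t :: real assume t: "t \<in> {0<..1}"
  define g where "g w = rderiv \<phi> w * indicator {0<..<1} w" for w
  have "ennreal (\<phi> t / t) * (\<integral>\<^sup>+ w\<in>{0<..<t}. ennreal (drearr X w) \<partial>lborel)
      \<le> (\<integral>\<^sup>+ w\<in>{0<..<t}. ennreal (drearr X w * g w) \<partial>lborel)"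
  proof (rule nn_integral_antimono_mult_ge)
    show "antimono_on {0<..<t} (drearr X)"
      using X by (intro monotone_onI drearr_antimono) auto
    show "0 \<le> drearr X w" if "0 < w" for w
      using X that by (rule drearr_nonneg)
    show "0 \<le> g w" for w
      using rderiv_nonneg[of w] by (simp add: g_def indicator_def)
    show "0 \<le> \<phi> t / t"
      using phi_nonneg[of t] t by simp
    show "g \<in> borel_measurable borel"
      unfolding g_def by (rule borel_measurable_rderiv_concave_on[OF concave])
    fix m :: real assume m: "0 < m" "m \<le> t"
    have "ennreal (\<phi> t / t * m) \<le> ennreal (\<phi> m)"
      using phi_ratio_antimono[of m t] m t by (intro ennreal_leI) (simp add: field_simps)
    also have "\<dots> \<le> (\<integral>\<^sup>+ w\<in>{0<..<m}. ennreal (rderiv \<phi> w) \<partial>lborel)"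
      using m t by (intro nn_integral_rderiv_ge) auto
    also have "\<dots> = (\<integral>\<^sup>+ w\<in>{0<..<m}. ennreal (g w) \<partial>lborel)"
      using m t by (intro nn_integral_cong) (auto simp: g_def split: split_indicator)
    finally show "ennreal (\<phi> t / t * m) \<le> (\<integral>\<^sup>+ w\<in>{0<..<m}. ennreal (g w) \<partial>lborel)" .
  qed
  also have "\<dots> \<le> lorentz_norm \<phi> X"
    unfolding lorentz_norm_def using t by (intro nn_integral_mono) (auto simp: g_def split: split_indicator)
  finally show "ennreal (\<phi> t / t) * (\<integral>\<^sup>+ w\<in>{0<..<t}. ennreal (drearr X w) \<partial>lborel) \<le> lorentz_norm \<phi> X" .
qed

lemma TM_space_eq_M_space: "TM_space \<phi> = M_space \<phi>"
proof -
  have "tm_norm \<phi> X < \<infinity> \<longleftrightarrow> m_norm \<phi> X < \<infinity>" if "X \<in> rv" for X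
  proof
    show "tm_norm \<phi> X < \<infinity> \<Longrightarrow> m_norm \<phi> X < \<infinity>"
      using m_norm_le_tm_norm[OF that] by (rule order.strict_trans1)
    assume "m_norm \<phi> X < \<infinity>"
    then have "2 * m_norm \<phi> X < \<infinity>"
      by (simp add: ennreal_mult_less_top)
    then show "tm_norm \<phi> X < \<infinity>"
      using tm_norm_le_m_norm[of X] by (rule order.strict_trans1[rotated])
  qed
  then show ?thesis
    by (auto simp: TM_space_def M_space_def)
qed

lemma Lorentz_space_subset_M_space: "Lorentz_space \<phi> \<subseteq> M_space \<phi>"
  unfolding Lorentz_space_def M_space_def using m_norm_le_lorentz_norm order.strict_trans1 by blast

end

section \<open>A function in M but not in the Lorentz space\<close>

lemma sum_doubling_le:
  fixes q :: "nat \<Rightarrow> real"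
  assumes nonneg: "\<And>n. 0 \<le> q n" and doubling: "\<And>n. 2 * q n \<le> q (Suc n)"
    and "finite S" and bound: "\<And>n. n \<in> S \<Longrightarrow> q n \<le> C" and "0 \<le> C"
  shows "(\<Sum>n\<in>S. q n) \<le> 2 * C"
proof (cases "S = {}")
  case False
  define M where "M = Max S"
  have partial: "(\<Sum>n\<le>k. q n) \<le> 2 * q k" for k
    using nonneg doubling by (induction k) (auto intro: order.trans[OF _ doubling])
  have "(\<Sum>n\<in>S. q n) \<le> (\<Sum>n\<le>M. q n)"
    using \<open>finite S\<close> False nonneg by (intro sum_mono2) (auto simp: M_def)
  also have "\<dots> \<le> 2 * C"
    using partial[of M] bound[of M] \<open>finite S\<close> False by (simp add: M_def)
  finally show ?thesis .
qed (use \<open>0 \<le> C\<close> in simp)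

lemma sum_halving_le:
  fixes r :: "nat \<Rightarrow> real"
  assumes nonneg: "\<And>n. 0 \<le> r n" and halving: "\<And>n. 2 * r (Suc n) \<le> r n"
    and "finite S" and bound: "\<And>n. n \<in> S \<Longrightarrow> r n \<le> C" and "0 \<le> C"
  shows "(\<Sum>n\<in>S. r n) \<le> 2 * C"
proof (cases "S = {}")
  case False
  define m where "m = Min S"
  have partial: "(\<Sum>n\<in>{m..<m + k}. r n) + 2 * r (m + k) \<le> 2 * r m" for k
  proof (induction k)
    case (Suc k)
    then show ?case
      using halving[of "m + k"] by simp
  qed simp
  have "S \<subseteq> {m..<m + (Max S + 1 - m)}"
  proof
    fix x assume "x \<in> S"
    then have "m \<le> x" "x \<le> Max S"
      using \<open>finite S\<close> by (auto simp: m_def)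
    then show "x \<in> {m..<m + (Max S + 1 - m)}"
      by simp
  qed
  then have "(\<Sum>n\<in>S. r n) \<le> (\<Sum>n\<in>{m..<m + (Max S + 1 - m)}. r n)"
    using nonneg by (intro sum_mono2) auto
  also have "\<dots> \<le> 2 * r m"
    using partial[of "Max S + 1 - m"] nonneg[of "m + (Max S + 1 - m)"] by simp
  also have "\<dots> \<le> 2 * C"
    using bound[of m] \<open>finite S\<close> False by (simp add: m_def)
  finally show ?thesis .
qed (use \<open>0 \<le> C\<close> in simp)

locale steep_concave_distortion = concave_distortion +
  assumes steep_at_0: "filterlim (\<lambda>h. (\<phi> h - \<phi> 0) / h) at_top (at_right 0)"
begin

lemma exists_halving_point:
  assumes t: "0 < t" "t \<le> 1"
  shows "\<exists>s. 0 < s \<and> s < t \<and> \<phi> s \<le> \<phi> t / 2 \<and> s / \<phi> s \<le> t / \<phi> t / 2"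
proof -
  have "0 < \<phi> t"
    using phi_pos t by simp
  then obtain d where d: "0 < d" "\<And>x. x \<in> {0..1} \<Longrightarrow> dist x 0 < d \<Longrightarrow> dist (\<phi> x) (\<phi> 0) < \<phi> t / 2"
    using continuous_at_0 unfolding continuous_within_eps_delta by (metis half_gt_zero)
  have "\<forall>\<^sub>F h in at_right 0. 2 * \<phi> t / t \<le> (\<phi> h - \<phi> 0) / h"
    using steep_at_0 unfolding filterlim_at_top by blast
  moreover have "\<forall>\<^sub>F h in at_right 0. h \<in> {0<..<min t d}"
    using t d by (intro eventually_at_right_real) auto
  ultimately have "\<exists>h. 2 * \<phi> t / t \<le> (\<phi> h - \<phi> 0) / h \<and> h \<in> {0<..<min t d}"
    by (intro eventually_happens'[OF trivial_limit_at_right_real eventually_conj])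
  then obtain h where h: "2 * \<phi> t / t \<le> \<phi> h / h" "0 < h" "h < t" "h < d"
    using zero by auto
  have "0 < \<phi> h"
    using phi_pos h t by simp
  moreover have "\<phi> h < \<phi> t / 2"
    using d(2)[of h] h t zero \<open>0 < \<phi> h\<close> by (simp add: dist_real_def)
  moreover have "h / \<phi> h \<le> t / \<phi> t / 2"
    using h t \<open>0 < \<phi> h\<close> \<open>0 < \<phi> t\<close> by (simp add: field_simps)
  ultimately show ?thesis
    using h by (intro exI[of _ h]) auto
qed

lemma exists_halving_sequence:
  "\<exists>s. \<forall>n. (0 < s n \<and> s n \<le> 1) \<and>
     \<phi> (s (Suc n)) \<le> \<phi> (s n) / 2 \<and> s (Suc n) / \<phi> (s (Suc n)) \<le> s n / \<phi> (s n) / 2"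
proof (rule dependent_nat_choice)
  fix t :: real and n assume "0 < t \<and> t \<le> 1"
  then show "\<exists>s. (0 < s \<and> s \<le> 1) \<and> \<phi> s \<le> \<phi> t / 2 \<and> s / \<phi> s \<le> t / \<phi> t / 2"
    using exists_halving_point by force
qed (rule exI[of _ 1], simp)

end

locale halving_sequence = concave_distortion +
  fixes s :: "nat \<Rightarrow> real"
  assumes s_pos: "0 < s n" and s_le_1: "s n \<le> 1"
    and phi_halving: "\<phi> (s (Suc n)) \<le> \<phi> (s n) / 2"
    and ratio_halving: "s (Suc n) / \<phi> (s (Suc n)) \<le> s n / \<phi> (s n) / 2"
begin

lemma phi_s_pos: "0 < \<phi> (s n)"
  using phi_pos s_pos s_le_1 by simp

lemma s_le_power: "s n \<le> (1 / 2) ^ n"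
proof -
  have "\<phi> (s n) \<le> (1 / 2) ^ n"
  proof (induction n)
    case 0
    then show ?case
      using phi_le_one s_pos s_le_1 by (simp add: less_imp_le)
  next
    case (Suc n)
    then show ?case
      using phi_halving[of n] by simp
  qed
  then show ?thesis
    using phi_ge_id[of "s n"] s_pos[of n] s_le_1[of n] by simp
qed

definition staircase :: "real \<Rightarrow> real" where
  "staircase x = (\<Sum>n. indicator {0<..<s n} x / \<phi> (s n))"

lemma staircase_summable: "summable (\<lambda>n. indicator {0<..<s n} x / \<phi> (s n))"
proof (cases "0 < x")
  case True
  obtain N where N: "(1 / 2) ^ N < x"
    using real_arch_pow_inv[OF True, of "1 / 2"] by auto
  have "indicator {0<..<s n} x / \<phi> (s n) = 0" if "n \<notin> {..<N}" for n
  proof -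
    have "s n \<le> (1 / 2) ^ N"
      using s_le_power[of n] power_decreasing[of N n "1 / 2 :: real"] that
      by (simp add: not_less order_trans)
    then show ?thesis
      using N by simp
  qed
  then show ?thesis
    by (intro sums_summable[OF sums_finite[of "{..<N}"]]) auto
qed simp

lemma staircase_nonneg: "0 \<le> staircase x"
  unfolding staircase_def using phi_s_pos
  by (intro suminf_nonneg[OF staircase_summable]) (simp add: less_imp_le)

lemma staircase_antimono: "antimono_on {0<..1} staircase"
  unfolding staircase_def using phi_s_pos
  by (intro monotone_onI suminf_le[OF _ staircase_summable staircase_summable])
    (auto simp: indicator_def less_imp_le)

lemma staircase_rv: "staircase \<in> rv"
proof -
  have "staircase \<in> borel_measurable borel"
    unfolding staircase_def[abs_def] by measurable
  then have "staircase \<in> borel_measurable lebesgue"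
    by (simp add: measurable_completion)
  then show ?thesis
    unfolding rv_def by (rule measurable_restrict_space1)
qed

lemma staircase_partial_sum_le:
  assumes t: "0 < t" "t \<le> 1"
  shows "(\<Sum>n<N. \<phi> t / t * (min (s n) t / \<phi> (s n))) \<le> 4"
proof -
  have "0 < \<phi> t"
    using phi_pos t by simp
  let ?A = "{n \<in> {..<N}. t \<le> s n}" and ?B = "{..<N} \<inter> - {n. t \<le> s n}"
  have "(\<Sum>n<N. \<phi> t / t * (min (s n) t / \<phi> (s n)))
      = (\<Sum>n<N. if t \<le> s n then \<phi> t * (1 / \<phi> (s n)) else \<phi> t / t * (s n / \<phi> (s n)))"
    using t by (intro sum.cong) auto
  also have "\<dots> = \<phi> t * (\<Sum>n\<in>?A. 1 / \<phi> (s n)) + \<phi> t / t * (\<Sum>n\<in>?B. s n / \<phi> (s n))"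
    by (simp add: sum.If_cases sum_distrib_left Int_def)
  also have "\<dots> \<le> \<phi> t * (2 * (1 / \<phi> t)) + \<phi> t / t * (2 * (t / \<phi> t))"
  proof (intro add_mono mult_left_mono)
    show "(\<Sum>n\<in>?A. 1 / \<phi> (s n)) \<le> 2 * (1 / \<phi> t)"
    proof (rule sum_doubling_le)
      show "2 * (1 / \<phi> (s n)) \<le> 1 / \<phi> (s (Suc n))" for n
        using phi_halving[of n] phi_s_pos[of "Suc n"] by (simp add: field_simps)
      show "1 / \<phi> (s n) \<le> 1 / \<phi> t" if "n \<in> ?A" for n
        using phi_mono[of t "s n"] that t s_le_1[of n] \<open>0 < \<phi> t\<close> by (simp add: frac_le)
    qed (use phi_s_pos \<open>0 < \<phi> t\<close> in \<open>auto simp: less_imp_le\<close>)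
    show "(\<Sum>n\<in>?B. s n / \<phi> (s n)) \<le> 2 * (t / \<phi> t)"
    proof (rule sum_halving_le)
      show "2 * (s (Suc n) / \<phi> (s (Suc n))) \<le> s n / \<phi> (s n)" for n
        using ratio_halving[of n] by simp
      show "s n / \<phi> (s n) \<le> t / \<phi> t" if "n \<in> ?B" for n
        using phi_ratio_antimono[of "s n" t] that t s_pos[of n] phi_s_pos[of n] \<open>0 < \<phi> t\<close>
        by (simp add: field_simps)
    qed (use phi_s_pos s_pos \<open>0 < \<phi> t\<close> t in \<open>auto simp: less_imp_le\<close>)
  qed (use \<open>0 < \<phi> t\<close> t in auto)
  also have "\<dots> = 4"
    using \<open>0 < \<phi> t\<close> t by simp
  finally show ?thesis .
qed

lemma nn_integral_staircase:
  assumes "0 < t"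
  shows "(\<integral>\<^sup>+ w\<in>{0<..<t}. ennreal (staircase w) \<partial>lborel) = (\<Sum>n. ennreal (min (s n) t / \<phi> (s n)))"
proof -
  have pointwise: "ennreal (staircase w) * indicator {0<..<t} w
      = (\<Sum>n. ennreal (1 / \<phi> (s n)) * indicator {0<..<min (s n) t} w)" for w
  proof -
    have "ennreal (staircase w) = (\<Sum>n. ennreal (indicator {0<..<s n} w / \<phi> (s n)))"
      unfolding staircase_def using phi_s_pos
      by (intro suminf_ennreal2[symmetric] staircase_summable) (simp add: less_imp_le)
    then have "ennreal (staircase w) * indicator {0<..<t} w
        = (\<Sum>n. ennreal (indicator {0<..<s n} w / \<phi> (s n)) * indicator {0<..<t} w)"
      by simp
    also have "\<dots> = (\<Sum>n. ennreal (1 / \<phi> (s n)) * indicator {0<..<min (s n) t} w)"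
      by (intro suminf_cong) (auto split: split_indicator)
    finally show ?thesis .
  qed
  have "(\<integral>\<^sup>+ w\<in>{0<..<t}. ennreal (staircase w) \<partial>lborel)
      = (\<integral>\<^sup>+ w. (\<Sum>n. ennreal (1 / \<phi> (s n)) * indicator {0<..<min (s n) t} w) \<partial>lborel)"
    by (simp only: pointwise)
  also have "\<dots> = (\<Sum>n. \<integral>\<^sup>+ w. ennreal (1 / \<phi> (s n)) * indicator {0<..<min (s n) t} w \<partial>lborel)"
    by (rule nn_integral_suminf) simp
  also have "\<dots> = (\<Sum>n. ennreal (min (s n) t / \<phi> (s n)))"
  proof (rule suminf_cong)
    fix n
    have "0 \<le> min (s n) t"
      using assms s_pos[of n] by simp
    then show "(\<integral>\<^sup>+ w. ennreal (1 / \<phi> (s n)) * indicator {0<..<min (s n) t} w \<partial>lborel)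
        = ennreal (min (s n) t / \<phi> (s n))"
      by (simp add: nn_integral_cmult_indicator flip: ennreal_mult'')
  qed
  finally show ?thesis .
qed

lemma m_norm_staircase_le: "m_norm \<phi> staircase \<le> 4"
  unfolding m_norm_def
proof (rule SUP_least)
  fix t :: real assume t: "t \<in> {0<..1}"
  have "(\<integral>\<^sup>+ w\<in>{0<..<t}. ennreal (drearr staircase w) \<partial>lborel)
      \<le> (\<integral>\<^sup>+ w\<in>{0<..<t}. ennreal (staircase w) \<partial>lborel)"
    using t staircase_rv staircase_nonneg staircase_antimono
    by (intro nn_integral_mono) (auto intro!: ennreal_leI drearr_le_antimono split: split_indicator)
  then have "ennreal (\<phi> t / t) * (\<integral>\<^sup>+ w\<in>{0<..<t}. ennreal (drearr staircase w) \<partial>lborel)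
      \<le> ennreal (\<phi> t / t) * (\<integral>\<^sup>+ w\<in>{0<..<t}. ennreal (staircase w) \<partial>lborel)"
    by (rule mult_left_mono) simp
  also have "\<dots> = (\<Sum>n. ennreal (\<phi> t / t) * ennreal (min (s n) t / \<phi> (s n)))"
    using t by (simp add: nn_integral_staircase)
  also have "\<dots> = (\<Sum>n. ennreal (\<phi> t / t * (min (s n) t / \<phi> (s n))))"
  proof -
    have "0 \<le> \<phi> t / t"
      using t phi_nonneg[of t] by simp
    then show ?thesis
      by (simp only: ennreal_mult')
  qed
  also have "\<dots> \<le> 4"
    unfolding suminf_eq_SUP
  proof (rule SUP_least)
    fix N
    have "(\<Sum>n<N. ennreal (\<phi> t / t * (min (s n) t / \<phi> (s n))))
        = ennreal (\<Sum>n<N. \<phi> t / t * (min (s n) t / \<phi> (s n)))"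
      using t phi_nonneg[of t] s_pos phi_s_pos by (intro sum_ennreal) (simp add: less_imp_le)
    also have "\<dots> \<le> ennreal 4"
      using t by (intro ennreal_leI staircase_partial_sum_le) auto
    finally show "(\<Sum>n<N. ennreal (\<phi> t / t * (min (s n) t / \<phi> (s n)))) \<le> 4"
      by simp
  qed
  finally show "ennreal (\<phi> t / t) * (\<integral>\<^sup>+ w\<in>{0<..<t}. ennreal (drearr staircase w) \<partial>lborel) \<le> 4" .
qed

text \<open>\<open>drearr staircase w\<close> is only compared with the staircase at 2w, a point strictly to the right of w;
  hence the support (0, s n / 2).\<close>

definition step_weight :: "nat \<Rightarrow> real \<Rightarrow> real" where
  "step_weight n w = rderiv \<phi> w * indicator {0<..<s n / 2} w / \<phi> (s n)"

lemma suminf_step_weight_le: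
  "(\<Sum>n. ennreal (step_weight n w)) \<le> ennreal (drearr staircase w * rderiv \<phi> w) * indicator {0<..<1} w"
proof (cases "0 < w \<and> 2 * w \<le> 1")
  case True
  then have "0 \<le> rderiv \<phi> w"
    using rderiv_nonneg[of w] by simp
  have "(\<Sum>n. ennreal (step_weight n w))
      = (\<Sum>n. ennreal (rderiv \<phi> w * (indicator {0<..<s n} (2 * w) / \<phi> (s n))))"
    unfolding step_weight_def by (intro suminf_cong) (simp add: indicator_def)
  also have "\<dots> = ennreal (\<Sum>n. rderiv \<phi> w * (indicator {0<..<s n} (2 * w) / \<phi> (s n)))"
    using \<open>0 \<le> rderiv \<phi> w\<close> phi_s_pos
    by (intro suminf_ennreal2 summable_mult staircase_summable) (simp add: less_imp_le)
  also have "\<dots> = ennreal (rderiv \<phi> w * staircase (2 * w))"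
    unfolding staircase_def by (simp only: suminf_mult[OF staircase_summable])
  also have "\<dots> \<le> ennreal (rderiv \<phi> w * drearr staircase w)"
    using True \<open>0 \<le> rderiv \<phi> w\<close> staircase_rv staircase_nonneg staircase_antimono
    by (intro ennreal_leI mult_left_mono drearr_ge_antimono) auto
  finally show ?thesis
    using True by (simp add: mult.commute)
next
  case False
  have "w \<notin> {0<..<s n / 2}" for n
    using False s_le_1[of n] by auto
  then show ?thesis
    by (simp add: step_weight_def)
qed

lemma borel_measurable_step_weight: "step_weight n \<in> borel_measurable borel"
proof -
  have "(\<lambda>w. rderiv \<phi> w * indicator {0<..<1} w * indicator {0<..<s n / 2} w / \<phi> (s n))
      \<in> borel_measurable borel"
    using borel_measurable_rderiv_concave_on[OF concave] by measurable
  also have "(\<lambda>w. rderiv \<phi> w * indicator {0<..<1} w * indicator {0<..<s n / 2} w / \<phi> (s n)) = step_weight n"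
    using s_le_1[of n] by (auto simp: step_weight_def fun_eq_iff split: split_indicator)
  finally show ?thesis .
qed

lemma nn_integral_step_weight_ge: "ennreal (1 / 2) \<le> (\<integral>\<^sup>+ w. ennreal (step_weight n w) \<partial>lborel)"
proof -
  have s: "0 < s n / 2" "s n / 2 \<le> 1"
    using s_pos[of n] s_le_1[of n] by auto
  have "1 / 2 \<le> 1 / \<phi> (s n) * \<phi> (s n / 2)"
    using phi_ratio_antimono[of "s n / 2" "s n"] s s_le_1[of n] phi_s_pos[of n] by (simp add: field_simps)
  then have "ennreal (1 / 2) \<le> ennreal (1 / \<phi> (s n) * \<phi> (s n / 2))"
    by (rule ennreal_leI)
  also have "\<dots> = ennreal (1 / \<phi> (s n)) * ennreal (\<phi> (s n / 2))"
    using phi_s_pos[of n] by (intro ennreal_mult') simp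
  also have "\<dots> \<le> ennreal (1 / \<phi> (s n)) * (\<integral>\<^sup>+ w\<in>{0<..<s n / 2}. ennreal (rderiv \<phi> w) \<partial>lborel)"
    using s by (intro mult_left_mono nn_integral_rderiv_ge) auto
  also have "\<dots> = (\<integral>\<^sup>+ w\<in>{0<..<s n / 2}. ennreal (1 / \<phi> (s n)) * ennreal (rderiv \<phi> w) \<partial>lborel)"
  proof -
    have "(\<lambda>w. ennreal (\<phi> (s n) * step_weight n w)) \<in> borel_measurable borel"
      using borel_measurable_step_weight by measurable
    also have "(\<lambda>w. ennreal (\<phi> (s n) * step_weight n w)) = (\<lambda>w. ennreal (rderiv \<phi> w) * indicator {0<..<s n / 2} w)"
      using phi_s_pos[of n] by (auto simp: step_weight_def fun_eq_iff split: split_indicator)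
    finally show ?thesis
      by (simp add: nn_integral_cmult[symmetric] mult.assoc)
  qed
  also have "\<dots> = (\<integral>\<^sup>+ w. ennreal (step_weight n w) \<partial>lborel)"
    using phi_s_pos[of n] s_le_1[of n] rderiv_nonneg
    by (intro nn_integral_cong) (simp add: step_weight_def ennreal_mult[symmetric] split: split_indicator)
  finally show ?thesis .
qed

lemma lorentz_norm_staircase: "lorentz_norm \<phi> staircase = \<infinity>"
proof -
  have "(\<Sum>n. ennreal (1 / 2)) \<le> (\<Sum>n. \<integral>\<^sup>+ w. ennreal (step_weight n w) \<partial>lborel)"
    using nn_integral_step_weight_ge by (intro suminf_le) auto
  also have "\<dots> = (\<integral>\<^sup>+ w. (\<Sum>n. ennreal (step_weight n w)) \<partial>lborel)"
    using borel_measurable_step_weight by (intro nn_integral_suminf[symmetric]) simp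
  also have "\<dots> \<le> lorentz_norm \<phi> staircase"
    unfolding lorentz_norm_def by (intro nn_integral_mono suminf_step_weight_le)
  finally show ?thesis
    using summable_iff_suminf_neq_top[of "\<lambda>_. 1 / 2"] by (simp add: summable_const_iff top_unique)
qed

end

theorem corollary31:
  fixes \<phi> :: "real \<Rightarrow> real"
  assumes "\<forall>x\<in>{0..1}. \<phi> x \<in> {0..1}"
    and "concave_on {0..1} \<phi>"
    and "\<phi> 0 = 0" and "\<phi> 1 = 1"
    and "continuous (at 0 within {0..1}) \<phi>"
    and "filterlim (\<lambda>h. (\<phi> h - \<phi> 0) / h) at_top (at_right 0)"
  shows "Lorentz_space \<phi> \<subset> TM_space \<phi> \<and> TM_space \<phi> = M_space \<phi>"
proof -
  interpret steep_concave_distortion \<phi>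
    using assms by unfold_locales
  obtain s where "\<forall>n. (0 < s n \<and> s n \<le> 1) \<and> \<phi> (s (Suc n)) \<le> \<phi> (s n) / 2
      \<and> s (Suc n) / \<phi> (s (Suc n)) \<le> s n / \<phi> (s n) / 2"
    using exists_halving_sequence by blast
  then interpret halving_sequence \<phi> s
    by unfold_locales auto
  have "staircase \<in> M_space \<phi>"
    using staircase_rv m_norm_staircase_le by (simp add: M_space_def le_less_trans)
  moreover have "staircase \<notin> Lorentz_space \<phi>"
    by (simp add: Lorentz_space_def lorentz_norm_staircase)
  ultimately show ?thesis
    using Lorentz_space_subset_M_space TM_space_eq_M_space by blast
qed

end
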